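(* Let $G_R=(V,E_R)$ be an undirected (unweighted) connected graph on $n$ vertices such that $w^R_{xy}/w^R_{yx}\le c$ for every edge $(x,y)\in E_R$, and let $G_M$ be the clique $K_n$ on $V$. Then for $r>0$ the fixation probability of the two-graph Moran process with resident graph $G_R$ and mutant graph $G_M$ satisfies $$f_{G_R,G_M}(r)\ \ge\ \left[\frac{1-\left(\frac cr\right)^{\log n}}{1-\frac cr}\,(1+o(1))+\frac{\left(\frac{2c}{r}\right)^{\log n}-\left(\frac{2c}{r}\right)^{n}}{1-\frac{2c}{r}}\right]^{-1}.$$ In particular, for $r>2c$ this lower bound tends to $1-\frac cr$ as $n\to\infty$.
   Context: Two-graph Moran process: vertex set $V=\{1,\dots,n\}$; resident graph $G_R=(V,E_R)$ and mutant graph $G_M=(V,E_M)$, strongly connected, with row-stochastic weight matrices $W_R=[w^R_{ij}]$, $W_M=[w^M_{ij}]$ ($w^R_{ij}>0$ iff $(i,j)\in E_R$, similarly for $M$). The state is the mutant set $S$; residents have fitness $1$, mutants fitness $r>0$. Each step a vertex $i$ is chosen with probability proportional to fitness; if $i$ is a mutant, it picks $j$ with probability $w^M_{ij}$ and $j$ becomes a mutant; if a resident, it picks $j$ with probability $w^R_{ij}$ and $j$ becomes a resident. Absorption at $S=\emptyset$ or $S=V$ (fixation). The fixation probability $f_{G_R,G_M}(r)$ is the probability of fixation when starting with one mutant at a uniformly random vertex. Undirected graphs are unweighted: $w_{xy}=1/\deg(x)$ for each neighbour $y$ of $x$, so $w^R_{xy}/w^R_{yx}=\deg(y)/\deg(x)$;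 for the clique, $w^M_{xy}=1/(n-1)$. The $o(1)$ is as $n\to\infty$. *)

theory Defs
  imports Complex_Main
begin

text \<open>Two-graph Moran process on a finite vertex set V, with resident weights WR
and mutant weights WM (row-stochastic matrices given as functions).
The state is the set S of mutants.\<close>

definition fitness :: "real \<Rightarrow> nat set \<Rightarrow> nat \<Rightarrow> real" where
  "fitness r S i = (if i \<in> S then r else 1)"

definition moran_step ::
  "nat set \<Rightarrow> (nat \<Rightarrow> nat \<Rightarrow> real) \<Rightarrow> (nat \<Rightarrow> nat \<Rightarrow> real) \<Rightarrow> real
   \<Rightarrow> (nat set \<Rightarrow> real) \<Rightarrow> nat set \<Rightarrow> real" where
  "moran_step V WR WM r h S =
     (\<Sum>i\<in>V. (fitness r S i / (\<Sum>k\<in>V. fitness r S k)) *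
        (\<Sum>j\<in>V. if i \<in> S then WM i j * h (insert j S) else WR i j * h (S - {j})))"

fun fix_within ::
  "nat set \<Rightarrow> (nat \<Rightarrow> nat \<Rightarrow> real) \<Rightarrow> (nat \<Rightarrow> nat \<Rightarrow> real) \<Rightarrow> real
   \<Rightarrow> nat \<Rightarrow> nat set \<Rightarrow> real" where
  "fix_within V WR WM r 0 S = (if S = V then 1 else 0)"
| "fix_within V WR WM r (Suc k) S =
     (if S = V then 1 else if S = {} then 0
      else moran_step V WR WM r (fix_within V WR WM r k) S)"

definition fixation_prob ::
  "nat set \<Rightarrow> (nat \<Rightarrow> nat \<Rightarrow> real) \<Rightarrow> (nat \<Rightarrow> nat \<Rightarrow> real) \<Rightarrow> real \<Rightarrow> nat set \<Rightarrow> real" where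
  "fixation_prob V WR WM r S = lim (\<lambda>k. fix_within V WR WM r k S)"

text \<open>f_{G_R,G_M}(r): one initial mutant at a uniformly random vertex.\<close>
definition fixation_probability ::
  "nat set \<Rightarrow> (nat \<Rightarrow> nat \<Rightarrow> real) \<Rightarrow> (nat \<Rightarrow> nat \<Rightarrow> real) \<Rightarrow> real \<Rightarrow> real" where
  "fixation_probability V WR WM r = (\<Sum>v\<in>V. fixation_prob V WR WM r {v}) / real (card V)"

definition undirected_graph :: "nat set \<Rightarrow> (nat \<Rightarrow> nat \<Rightarrow> bool) \<Rightarrow> bool" where
  "undirected_graph V E = (\<forall>x y. E x y \<longrightarrow> x \<in> V \<and> y \<in> V \<and> x \<noteq> y \<and> E y x)"

definition connected_graph :: "nat set \<Rightarrow> (nat \<Rightarrow> nat \<Rightarrow> bool) \<Rightarrow> bool" where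
  "connected_graph V E = (\<forall>x\<in>V. \<forall>y\<in>V. E\<^sup>*\<^sup>* x y)"

definition deg :: "nat set \<Rightarrow> (nat \<Rightarrow> nat \<Rightarrow> bool) \<Rightarrow> nat \<Rightarrow> nat" where
  "deg V E x = card {y \<in> V. E x y}"

definition unweighted :: "nat set \<Rightarrow> (nat \<Rightarrow> nat \<Rightarrow> bool) \<Rightarrow> nat \<Rightarrow> nat \<Rightarrow> real" where
  "unweighted V E x y = (if E x y then 1 / real (deg V E x) else 0)"

definition clique_weights :: "nat set \<Rightarrow> nat \<Rightarrow> nat \<Rightarrow> real" where
  "clique_weights V x y = (if x \<in> V \<and> y \<in> V \<and> x \<noteq> y then 1 / (real (card V) - 1) else 0)"

text \<open>(1 - q^L)/(1 - q) and (q^L - q^N)/(1 - q), continuously extended at q = 1.\<close>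
definition geo_quot :: "real \<Rightarrow> real \<Rightarrow> real" where
  "geo_quot q L = (if q = 1 then L else (1 - q powr L) / (1 - q))"

definition tail_quot :: "real \<Rightarrow> real \<Rightarrow> real \<Rightarrow> real" where
  "tail_quot q L N = (if q = 1 then N - L else (q powr L - q powr N) / (1 - q))"

definition lower_bound :: "real \<Rightarrow> real \<Rightarrow> (nat \<Rightarrow> real) \<Rightarrow> nat \<Rightarrow> real" where
  "lower_bound c r \<epsilon> n =
     1 / (geo_quot (c / r) (ln (real n)) * (1 + \<epsilon> n)
          + tail_quot (2 * c / r) (ln (real n)) (real n))"

end

theory Submission
  imports Defs "HOL-Real_Asymp.Real_Asymp"
begin

text \<open>
  With the clique as mutant graph, let the potential of a mutant set S depend only on
  k = |S|, with increments proportional to positive weights \<rho>(k). It is subharmonic for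
  the Moran step as soon as the weight D(S) of the resident edges entering S satisfies
  D(S) \<rho>(k - 1) \<le> r k (n - k)/(n - 1) \<rho>(k), and then the fixation probability from a
  single mutant is at least \<rho>(0) / \<Sum>j. \<rho>(j); absorption is guaranteed because the
  potential with weights 2^j \<rho>(j) is even strictly subharmonic.

  For an unweighted resident graph with degree ratios at most c one has
  D(S) \<le> min (c k) (n - k). Hence the condition holds with \<rho>(k)/\<rho>(k - 1) equal to
  (c/r)(n - 1)/(n - \<lfloor>ln n\<rfloor> - 1) for k \<le> \<lfloor>ln n\<rfloor> + 1, where the bound c k suffices,
  and equal to 2c/r beyond, where min (k, n - k) is within a factor 2 of k (n - k)/(n - 1).
  The inflation factor raised to the power ln n tends to 1, and summing the two
  geometric series gives the bound.
\<close>

section \<open>Absorption of the Moran process\<close>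

lemma moran_step_add:
  "moran_step V WR WM r (\<lambda>T. h1 T + h2 T) S = moran_step V WR WM r h1 S + moran_step V WR WM r h2 S"
  unfolding moran_step_def sum.distrib[symmetric] distrib_left[symmetric]
  by (intro sum.cong refl arg_cong2[where f="(*)"]) (simp add: sum.distrib distrib_left)

lemma moran_step_cmult:
  "moran_step V WR WM r (\<lambda>T. a * h T) S = a * moran_step V WR WM r h S"
  unfolding moran_step_def sum_distrib_left
  by (intro sum.cong refl) (simp add: sum_distrib_left ac_simps)

lemma moran_step_diff:
  "moran_step V WR WM r (\<lambda>T. h1 T - h2 T) S = moran_step V WR WM r h1 S - moran_step V WR WM r h2 S"
  using moran_step_add[of V WR WM r h1 "\<lambda>T. - 1 * h2 T" S] moran_step_cmult[of V WR WM r "- 1" h2 S]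
  by simp

lemma moran_step_sum:
  "moran_step V WR WM r (\<lambda>T. \<Sum>i\<in>I. h i T) S = (\<Sum>i\<in>I. moran_step V WR WM r (h i) S)"
proof (induction I rule: infinite_finite_induct)
  case (infinite I)
  then show ?case using moran_step_cmult[of V WR WM r 0 "\<lambda>_. 0" S] by simp
next
  case empty
  then show ?case using moran_step_cmult[of V WR WM r 0 "\<lambda>_. 0" S] by simp
next
  case (insert i I)
  then show ?case by (simp add: moran_step_add)
qed

primrec not_absorbed_within ::
  "nat set \<Rightarrow> (nat \<Rightarrow> nat \<Rightarrow> real) \<Rightarrow> (nat \<Rightarrow> nat \<Rightarrow> real) \<Rightarrow> real
   \<Rightarrow> nat \<Rightarrow> nat set \<Rightarrow> real" where
  "not_absorbed_within V WR WM r 0 S = (if S = V \<or> S = {} then 0 else 1)"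
| "not_absorbed_within V WR WM r (Suc k) S =
     (if S = V \<or> S = {} then 0
      else moran_step V WR WM r (not_absorbed_within V WR WM r k) S)"

locale moran_process =
  fixes V :: "nat set" and WR WM :: "nat \<Rightarrow> nat \<Rightarrow> real" and r :: real
  assumes finite_V: "finite V" and V_nonempty: "V \<noteq> {}" and r_pos: "0 < r"
    and WR_nonneg: "\<And>i j. 0 \<le> WR i j" and WM_nonneg: "\<And>i j. 0 \<le> WM i j"
    and WR_row_sum: "\<And>i. i \<in> V \<Longrightarrow> (\<Sum>j\<in>V. WR i j) = 1"
    and WM_row_sum: "\<And>i. i \<in> V \<Longrightarrow> (\<Sum>j\<in>V. WM i j) = 1"
begin

abbreviation step where "step \<equiv> moran_step V WR WM r"
abbreviation fixed where "fixed \<equiv> fix_within V WR WM r"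
abbreviation alive where "alive \<equiv> not_absorbed_within V WR WM r"

lemma fitness_sum_pos: "0 < (\<Sum>k\<in>V. fitness r S k)"
  using finite_V V_nonempty r_pos by (intro sum_pos) (auto simp: fitness_def)

lemma step_const: "step (\<lambda>_. a) S = a"
proof -
  have "(\<Sum>j\<in>V. if i \<in> S then WM i j * a else WR i j * a) = a" if "i \<in> V" for i
    using that WR_row_sum WM_row_sum by (cases "i \<in> S") (simp_all add: sum_distrib_right[symmetric])
  then have "step (\<lambda>_. a) S = (\<Sum>i\<in>V. fitness r S i / (\<Sum>k\<in>V. fitness r S k) * a)"
    unfolding moran_step_def by (intro sum.cong) auto
  also have "\<dots> = a"
    using fitness_sum_pos[of S]
    by (simp add: sum_distrib_right[symmetric] sum_divide_distrib[symmetric])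
  finally show ?thesis .
qed

lemma step_mono:
  assumes "\<And>T. T \<subseteq> V \<Longrightarrow> h1 T \<le> h2 T" and "S \<subseteq> V"
  shows "step h1 S \<le> step h2 S"
  unfolding moran_step_def
proof (intro sum_mono mult_left_mono)
  fix i j assume "i \<in> V" "j \<in> V"
  then show "(if i \<in> S then WM i j * h1 (insert j S) else WR i j * h1 (S - {j}))
      \<le> (if i \<in> S then WM i j * h2 (insert j S) else WR i j * h2 (S - {j}))"
    using assms(2) by (auto intro!: mult_left_mono assms(1) WR_nonneg WM_nonneg)
next
  fix i
  show "0 \<le> fitness r S i / (\<Sum>k\<in>V. fitness r S k)"
    using r_pos by (intro divide_nonneg_pos fitness_sum_pos) (simp add: fitness_def)
qed

lemma step_bounds:
  assumes "\<And>T. T \<subseteq> V \<Longrightarrow> a \<le> h T \<and> h T \<le> b" and "S \<subseteq> V"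
  shows "a \<le> step h S \<and> step h S \<le> b"
  using step_mono[of "\<lambda>_. a" h S] step_mono[of h "\<lambda>_. b" S] assms by (simp add: step_const)

lemma fix_within_bounds: "S \<subseteq> V \<Longrightarrow> 0 \<le> fixed k S \<and> fixed k S \<le> 1"
  by (induction k arbitrary: S) (auto intro!: step_bounds)

lemma fix_within_incseq:
  assumes "S \<subseteq> V" shows "incseq (\<lambda>k. fixed k S)"
proof (rule incseq_SucI)
  show "fixed k S \<le> fixed (Suc k) S" for k
    using assms
  proof (induction k arbitrary: S)
    case 0
    then show ?case using step_bounds[where h="fixed 0" and a=0 and b=1] fix_within_bounds by auto
  next
    case (Suc k)
    then show ?case by (auto intro: step_mono)
  qed
qed

lemma fix_within_tendsto:
  assumes "S \<subseteq> V" shows "(\<lambda>k. fixed k S) \<longlonglongrightarrow> fixation_prob V WR WM r S"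
proof -
  obtain L where "(\<lambda>k. fixed k S) \<longlonglongrightarrow> L"
    using incseq_convergent[OF fix_within_incseq[OF assms], of 1] fix_within_bounds[OF assms] by blast
  then show ?thesis unfolding fixation_prob_def by (simp add: limI)
qed

lemma not_absorbed_absorbing: "S = V \<or> S = {} \<Longrightarrow> alive k S = 0"
  by (cases k) auto

lemma not_absorbed_bounds: "S \<subseteq> V \<Longrightarrow> 0 \<le> alive k S \<and> alive k S \<le> 1"
  by (induction k arbitrary: S) (auto intro!: step_bounds)

lemma not_absorbed_decseq:
  assumes "S \<subseteq> V" shows "decseq (\<lambda>k. alive k S)"
proof (rule decseq_SucI)
  show "alive (Suc k) S \<le> alive k S" for k
    using assms
  proof (induction k arbitrary: S)
    case 0
    then show ?case using step_bounds[where h="alive 0" and a=0 and b=1] not_absorbed_bounds by auto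
  next
    case (Suc k)
    then show ?case by (auto intro: step_mono)
  qed
qed

lemma subharmonic_le_fix_within:
  assumes le_1: "\<And>T. T \<subseteq> V \<Longrightarrow> h T \<le> 1" and empty: "h {} \<le> 0"
    and subharmonic: "\<And>T. T \<subseteq> V \<Longrightarrow> T \<noteq> {} \<Longrightarrow> T \<noteq> V \<Longrightarrow> h T \<le> step h T"
    and "S \<subseteq> V"
  shows "h S - fixed k S \<le> alive k S"
  using \<open>S \<subseteq> V\<close>
proof (induction k arbitrary: S)
  case 0
  then show ?case using le_1 empty by auto
next
  case (Suc k)
  show ?case
  proof (cases "S = V \<or> S = {}")
    case True
    then show ?thesis using le_1 empty by auto
  next
    case False
    have "h S - fixed (Suc k) S \<le> step h S - step (fixed k) S"
      using False Suc.prems subharmonic by simp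
    also have "\<dots> = step (\<lambda>T. h T - fixed k T) S"
      by (simp add: moran_step_diff)
    also have "\<dots> \<le> step (alive k) S"
      using Suc by (intro step_mono) auto
    finally show ?thesis using False by simp
  qed
qed

lemma not_absorbed_tendsto_0:
  assumes le_1: "\<And>T. T \<subseteq> V \<Longrightarrow> g T \<le> 1"
    and strict: "\<And>T. T \<subseteq> V \<Longrightarrow> T \<noteq> {} \<Longrightarrow> T \<noteq> V \<Longrightarrow> g T < step g T"
    and S: "S \<subseteq> V"
  shows "(\<lambda>k. alive k S) \<longlonglongrightarrow> 0"
proof -
  \<comment> \<open>the least gain of g over the finitely many transient states; 1 covers the case of none\<close>
  define \<delta> where
    "\<delta> = Min (insert 1 ((\<lambda>T. step g T - g T) ` {T. T \<subseteq> V \<and> T \<noteq> {} \<and> T \<noteq> V}))"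
  have finite_transient: "finite {T. T \<subseteq> V \<and> T \<noteq> {} \<and> T \<noteq> V}"
    using finite_V by simp
  have \<delta>_pos: "0 < \<delta>"
    unfolding \<delta>_def using finite_transient strict by (subst Min_gr_iff) auto
  have \<delta>_le: "\<delta> \<le> step g T - g T" if "T \<subseteq> V" "T \<noteq> {}" "T \<noteq> V" for T
    unfolding \<delta>_def using finite_transient that by (intro Min_le) auto
  have sum_bound: "\<delta> * (\<Sum>i<k. alive i T) \<le> 1 - g T" if "T \<subseteq> V" for k T
    using that
  proof (induction k arbitrary: T)
    case 0
    then show ?case using le_1 by simp
  next
    case (Suc k)
    show ?case
    proof (cases "T = V \<or> T = {}")
      case True
      then show ?thesis using Suc.prems le_1 by (simp add: not_absorbed_absorbing)
    next
      case False
      have "(\<Sum>i<Suc k. alive i T) = alive 0 T + (\<Sum>i<k. alive (Suc i) T)"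
        by (rule sum.lessThan_Suc_shift)
      also have "\<dots> = 1 + step (\<lambda>T. \<Sum>i<k. alive i T) T"
        using False by (simp add: moran_step_sum)
      finally have "\<delta> * (\<Sum>i<Suc k. alive i T) = \<delta> + step (\<lambda>T. \<delta> * (\<Sum>i<k. alive i T)) T"
        by (simp add: moran_step_cmult distrib_left)
      also have "\<dots> \<le> \<delta> + step (\<lambda>T. 1 - g T) T"
        using Suc by (intro add_left_mono step_mono) auto
      also have "\<dots> \<le> 1 - g T"
        using \<delta>_le[of T] False Suc.prems by (simp add: moran_step_diff step_const)
      finally show ?thesis .
    qed
  qed
  have bound: "alive k S \<le> (1 - g S) / \<delta> * inverse (real k)" if "1 \<le> k" for k
  proof -
    have "\<delta> * (real k * alive k S) \<le> \<delta> * (\<Sum>i<k. alive i S)"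
      using decseqD[OF not_absorbed_decseq[OF S]] \<delta>_pos
      by (intro mult_left_mono) (auto intro: sum_bounded_below[where A="{..<k}", simplified])
    with sum_bound[OF S, of k] have "\<delta> * (real k * alive k S) \<le> 1 - g S" by linarith
    then show ?thesis using that \<delta>_pos by (simp add: field_simps)
  qed
  show ?thesis
  proof (rule tendsto_sandwich[where f="\<lambda>_. 0" and h="\<lambda>k. (1 - g S) / \<delta> * inverse (real k)"])
    show "\<forall>\<^sub>F k in sequentially. 0 \<le> alive k S"
      using not_absorbed_bounds[OF S] by simp
    show "\<forall>\<^sub>F k in sequentially. alive k S \<le> (1 - g S) / \<delta> * inverse (real k)"
      using bound by (intro eventually_sequentiallyI[of 1]) auto
    show "(\<lambda>k. (1 - g S) / \<delta> * inverse (real k)) \<longlonglongrightarrow> 0"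
      by (intro tendsto_mult_right_zero lim_inverse_n)
  qed simp
qed

lemma fixation_prob_ge_subharmonic:
  assumes "\<And>T. T \<subseteq> V \<Longrightarrow> h T \<le> 1" and "h {} \<le> 0"
    and "\<And>T. T \<subseteq> V \<Longrightarrow> T \<noteq> {} \<Longrightarrow> T \<noteq> V \<Longrightarrow> h T \<le> step h T"
    and "\<And>T. T \<subseteq> V \<Longrightarrow> g T \<le> 1"
    and "\<And>T. T \<subseteq> V \<Longrightarrow> T \<noteq> {} \<Longrightarrow> T \<noteq> V \<Longrightarrow> g T < step g T"
    and S: "S \<subseteq> V"
  shows "h S \<le> fixation_prob V WR WM r S"
proof -
  have "(\<lambda>k. fixed k S + alive k S) \<longlonglongrightarrow> fixation_prob V WR WM r S + 0"
    using fix_within_tendsto[OF S] not_absorbed_tendsto_0[OF assms(4,5) S] by (rule tendsto_add)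
  moreover have "h S \<le> fixed k S + alive k S" for k
    using subharmonic_le_fix_within[OF assms(1-3) S, of k] by simp
  ultimately show ?thesis by (intro LIMSEQ_le_const) auto
qed

end

section \<open>Mutants on the clique\<close>

lemma clique_weights_nonneg: "finite V \<Longrightarrow> 0 \<le> clique_weights V i j"
  by (auto simp: clique_weights_def Suc_le_eq card_gt_0_iff)

lemma clique_weights_row_sum:
  assumes "finite V" and "2 \<le> card V" and "i \<in> V"
  shows "(\<Sum>j\<in>V. clique_weights V i j) = 1"
proof -
  have "(\<Sum>j\<in>V. clique_weights V i j) = (\<Sum>j\<in>V - {i}. 1 / (real (card V) - 1))"
    using assms by (intro sum.mono_neutral_cong_right) (auto simp: clique_weights_def)
  also have "\<dots> = 1"
    using assms by (simp add: of_nat_diff)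
  finally show ?thesis .
qed

lemma fitness_sum:
  assumes "finite V" and "S \<subseteq> V"
  shows "(\<Sum>i\<in>V. fitness r S i) = r * real (card S) + (real (card V) - real (card S))"
proof -
  have "(\<Sum>i\<in>V. fitness r S i) = (\<Sum>i\<in>S. fitness r S i) + (\<Sum>i\<in>V - S. fitness r S i)"
    using assms by (metis add.commute sum.subset_diff)
  then show ?thesis
    using assms by (simp add: fitness_def card_Diff_subset finite_subset of_nat_diff card_mono)
qed

lemma clique_mutant_increment:
  assumes "finite V" and "S \<subseteq> V" and "i \<in> S"
  shows "(\<Sum>j\<in>V. clique_weights V i j * (\<Phi> (card (insert j S)) - \<Phi> (card S)))
    = (real (card V) - real (card S)) / (real (card V) - 1) * (\<Phi> (card S + 1) - \<Phi> (card S))"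
proof -
  have finite_S: "finite S" using assms finite_subset by blast
  have "(\<Sum>j\<in>V. clique_weights V i j * (\<Phi> (card (insert j S)) - \<Phi> (card S)))
      = (\<Sum>j\<in>V - S. 1 / (real (card V) - 1) * (\<Phi> (card S + 1) - \<Phi> (card S)))"
    using assms finite_S
    by (intro sum.mono_neutral_cong_right) (auto simp: clique_weights_def insert_absorb)
  then show ?thesis
    using assms by (simp add: card_Diff_subset finite_S of_nat_diff card_mono)
qed

lemma resident_decrement:
  fixes W \<Phi> :: "nat \<Rightarrow> real"
  assumes "finite V" and "S \<subseteq> V"
  shows "(\<Sum>j\<in>V. W j * (\<Phi> (card (S - {j})) - \<Phi> (card S)))
    = (\<Sum>j\<in>S. W j) * (\<Phi> (card S - 1) - \<Phi> (card S))"
proof -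
  have "finite S" using assms finite_subset by blast
  then have "(\<Sum>j\<in>V. W j * (\<Phi> (card (S - {j})) - \<Phi> (card S)))
      = (\<Sum>j\<in>S. W j * (\<Phi> (card S - 1) - \<Phi> (card S)))"
    using assms by (intro sum.mono_neutral_cong_right) auto
  then show ?thesis by (simp add: sum_distrib_right)
qed

definition boundary_weight :: "nat set \<Rightarrow> (nat \<Rightarrow> nat \<Rightarrow> real) \<Rightarrow> nat set \<Rightarrow> real" where
  "boundary_weight V W S = (\<Sum>i\<in>V - S. \<Sum>j\<in>S. W i j)"

lemma boundary_weight_le_card_Diff:
  assumes "finite V" and "S \<subseteq> V" and "\<And>i j. 0 \<le> W i j"
    and "\<And>i. i \<in> V \<Longrightarrow> (\<Sum>j\<in>V. W i j) = 1"
  shows "boundary_weight V W S \<le> real (card V) - real (card S)"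
proof -
  have "boundary_weight V W S \<le> (\<Sum>i\<in>V - S. \<Sum>j\<in>V. W i j)"
    unfolding boundary_weight_def using assms by (intro sum_mono sum_mono2) auto
  also have "\<dots> = real (card (V - S))"
    using assms by simp
  finally show ?thesis
    using assms by (simp add: card_Diff_subset finite_subset of_nat_diff card_mono)
qed

lemma boundary_weight_le_column_sum:
  assumes "finite V" and "S \<subseteq> V" and "\<And>i j. 0 \<le> W i j"
    and "\<And>j. j \<in> V \<Longrightarrow> (\<Sum>i\<in>V. W i j) \<le> c"
  shows "boundary_weight V W S \<le> c * real (card S)"
proof -
  have "boundary_weight V W S \<le> (\<Sum>i\<in>V. \<Sum>j\<in>S. W i j)"
    unfolding boundary_weight_def using assms by (intro sum_mono2) (auto intro: sum_nonneg)
  also have "\<dots> = (\<Sum>j\<in>S. \<Sum>i\<in>V. W i j)"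
    by (rule sum.swap)
  also have "\<dots> \<le> (\<Sum>j\<in>S. c)"
    using assms by (intro sum_mono) auto
  finally show ?thesis by (simp add: mult.commute)
qed

definition clique_gain :: "real \<Rightarrow> nat \<Rightarrow> nat \<Rightarrow> real" where
  "clique_gain r n k = r * real k * (real n - real k) / (real n - 1)"

lemma clique_gain_pos: "0 < r \<Longrightarrow> 1 \<le> k \<Longrightarrow> k < n \<Longrightarrow> 0 < clique_gain r n k"
  unfolding clique_gain_def by (intro divide_pos_pos mult_pos_pos) auto

definition potential :: "(nat \<Rightarrow> real) \<Rightarrow> nat \<Rightarrow> nat \<Rightarrow> real" where
  "potential \<sigma> n k = (\<Sum>j<k. \<sigma> j) / (\<Sum>j<n. \<sigma> j)"

lemma potential_0 [simp]: "potential \<sigma> n 0 = 0"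
  by (simp add: potential_def)

lemma potential_Suc_diff: "potential \<sigma> n (Suc k) - potential \<sigma> n k = \<sigma> k / (\<Sum>j<n. \<sigma> j)"
  by (simp add: potential_def diff_divide_distrib[symmetric])

lemma potential_le_1:
  assumes "\<And>j. 0 < \<sigma> j" and "k \<le> n"
  shows "potential \<sigma> n k \<le> 1"
proof (cases "n = 0")
  case False
  then have "0 < (\<Sum>j<n. \<sigma> j)" using assms by (intro sum_pos) auto
  moreover have "(\<Sum>j<k. \<sigma> j) \<le> (\<Sum>j<n. \<sigma> j)"
    using assms by (intro sum_mono2) (auto intro: less_imp_le)
  ultimately show ?thesis by (simp add: potential_def)
qed (use assms in simp)

lemma card_transient:
  assumes "finite V" and "S \<subseteq> V" and "S \<noteq> {}" and "S \<noteq> V"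
  shows "1 \<le> card S" and "card S < card V"
  using assms by (auto simp: Suc_le_eq card_gt_0_iff finite_subset psubset_card_mono)

locale clique_mutant_process = moran_process V WR "clique_weights V" r for V WR r +
  assumes two_le_card: "2 \<le> card V"
begin

lemma step_card_function:
  assumes S: "S \<subseteq> V"
  shows "step (\<lambda>T. \<Phi> (card T)) S - \<Phi> (card S) =
    (clique_gain r (card V) (card S) * (\<Phi> (card S + 1) - \<Phi> (card S))
     - boundary_weight V WR S * (\<Phi> (card S) - \<Phi> (card S - 1)))
    / (r * real (card S) + (real (card V) - real (card S)))"
proof -
  define F where "F = r * real (card S) + (real (card V) - real (card S))"
  define up where
    "up = (real (card V) - real (card S)) / (real (card V) - 1) * (\<Phi> (card S + 1) - \<Phi> (card S))"
  have "step (\<lambda>T. \<Phi> (card T)) S - \<Phi> (card S) = step (\<lambda>T. \<Phi> (card T) - \<Phi> (card S)) S"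
    by (simp add: moran_step_diff step_const)
  also have "\<dots> = (\<Sum>i\<in>V. fitness r S i / F *
      (if i \<in> S then up else (\<Sum>j\<in>S. WR i j) * (\<Phi> (card S - 1) - \<Phi> (card S))))"
    unfolding moran_step_def F_def fitness_sum[OF finite_V S] up_def
    using clique_mutant_increment[OF finite_V S] resident_decrement[OF finite_V S]
    by (intro sum.cong refl arg_cong2[where f="(*)"]) auto
  also have "\<dots> = (\<Sum>i\<in>S. r / F * up)
      + (\<Sum>i\<in>V - S. 1 / F * ((\<Sum>j\<in>S. WR i j) * (\<Phi> (card S - 1) - \<Phi> (card S))))"
    using finite_V S by (subst sum.subset_diff[OF S finite_V]) (auto simp: fitness_def intro!: sum.cong)
  also have "\<dots> = (real (card S) * r * up
      + boundary_weight V WR S * (\<Phi> (card S - 1) - \<Phi> (card S))) / F"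
    unfolding boundary_weight_def sum_distrib_right by (simp add: add_divide_distrib sum_divide_distrib)
  also have "\<dots> = (clique_gain r (card V) (card S) * (\<Phi> (card S + 1) - \<Phi> (card S))
     - boundary_weight V WR S * (\<Phi> (card S) - \<Phi> (card S - 1))) / F"
    unfolding clique_gain_def up_def by (simp add: algebra_simps)
  finally show ?thesis unfolding F_def .
qed

lemma step_potential:
  assumes "S \<subseteq> V" and "S \<noteq> {}"
  shows "step (\<lambda>T. potential \<sigma> (card V) (card T)) S - potential \<sigma> (card V) (card S) =
    (clique_gain r (card V) (card S) * \<sigma> (card S) - boundary_weight V WR S * \<sigma> (card S - 1))
    / ((\<Sum>j<card V. \<sigma> j) * (r * real (card S) + (real (card V) - real (card S))))"
proof -
  have "potential \<sigma> (card V) (card S) - potential \<sigma> (card V) (card S - 1)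
      = \<sigma> (card S - 1) / (\<Sum>j<card V. \<sigma> j)"
    using potential_Suc_diff[of \<sigma> "card V" "card S - 1"] assms finite_V
    by (simp add: Suc_le_eq card_gt_0_iff finite_subset)
  then show ?thesis
    unfolding step_card_function[OF assms(1)]
    by (simp add: potential_Suc_diff diff_divide_distrib)
qed

theorem fixation_prob_ge_potential:
  assumes \<sigma>_pos: "\<And>j. 0 < \<sigma> j"
    and drift: "\<And>S. S \<subseteq> V \<Longrightarrow> S \<noteq> {} \<Longrightarrow> S \<noteq> V \<Longrightarrow>
      boundary_weight V WR S * \<sigma> (card S - 1) \<le> clique_gain r (card V) (card S) * \<sigma> (card S)"
    and v: "v \<in> V"
  shows "\<sigma> 0 / (\<Sum>j<card V. \<sigma> j) \<le> fixation_prob V WR (clique_weights V) r {v}"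
proof -
  define n where "n = card V"
  \<comment> \<open>doubling the weights makes the drift condition strict, which forces absorption\<close>
  define \<tau> where "\<tau> j = \<sigma> j * 2 ^ j" for j
  have \<tau>_pos: "0 < \<tau> j" for j using \<sigma>_pos by (simp add: \<tau>_def)
  have denominator_pos: "0 < (\<Sum>j<n. \<rho> j) * (r * real (card S) + (real n - real (card S)))"
    if "\<And>j. 0 < \<rho> j" "S \<subseteq> V" "S \<noteq> {}" for \<rho> S
    using that two_le_card r_pos finite_V card_mono[OF finite_V \<open>S \<subseteq> V\<close>]
    by (intro mult_pos_pos sum_pos add_pos_nonneg)
      (auto simp: n_def lessThan_empty_iff card_gt_0_iff finite_subset)
  have card_le: "card T \<le> n" if "T \<subseteq> V" for T
    using that finite_V by (simp add: n_def card_mono)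
  have "potential \<sigma> n (card {v}) \<le> fixation_prob V WR (clique_weights V) r {v}"
  proof (rule fixation_prob_ge_subharmonic[where h="\<lambda>T. potential \<sigma> n (card T)"
        and g="\<lambda>T. potential \<tau> n (card T)"])
    fix T assume T: "T \<subseteq> V" "T \<noteq> {}" "T \<noteq> V"
    have "0 \<le> clique_gain r n (card T) * \<sigma> (card T) - boundary_weight V WR T * \<sigma> (card T - 1)"
      using drift[OF T] by (simp add: n_def)
    then have "0 \<le> step (\<lambda>T. potential \<sigma> n (card T)) T - potential \<sigma> n (card T)"
      unfolding n_def step_potential[OF T(1,2)]
      using denominator_pos[where \<rho>=\<sigma>, OF \<sigma>_pos T(1,2)] by (simp add: n_def)
    then show "potential \<sigma> n (card T) \<le> step (\<lambda>T. potential \<sigma> n (card T)) T"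
      by simp
    have k: "1 \<le> card T" "card T < n" using card_transient[OF finite_V T] by (auto simp: n_def)
    have "boundary_weight V WR T * \<tau> (card T - 1)
        \<le> clique_gain r n (card T) * \<sigma> (card T) * 2 ^ (card T - 1)"
      using drift[OF T] unfolding \<tau>_def n_def by (simp add: mult.assoc[symmetric])
    also have "\<dots> < clique_gain r n (card T) * \<tau> (card T)"
      using k clique_gain_pos[OF r_pos k] \<sigma>_pos[of "card T"] unfolding \<tau>_def
      by (cases "card T") auto
    finally have "0 < step (\<lambda>T. potential \<tau> n (card T)) T - potential \<tau> n (card T)"
      unfolding n_def step_potential[OF T(1,2)]
      using denominator_pos[where \<rho>=\<tau>, OF \<tau>_pos T(1,2)] by (simp add: n_def)
    then show "potential \<tau> n (card T) < step (\<lambda>T. potential \<tau> n (card T)) T"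
      by simp
  next
    fix T assume "T \<subseteq> V"
    then show "potential \<sigma> n (card T) \<le> 1" "potential \<tau> n (card T) \<le> 1"
      using card_le \<sigma>_pos \<tau>_pos by (auto intro: potential_le_1)
  qed (use v in auto)
  then show ?thesis by (simp add: potential_def n_def)
qed

end

section \<open>Resident graphs with bounded degree ratio\<close>

locale degree_ratio_graph =
  fixes V :: "nat set" and E :: "nat \<Rightarrow> nat \<Rightarrow> bool" and c :: real
  assumes finite_V: "finite V" and two_le_card: "2 \<le> card V"
    and undirected: "undirected_graph V E" and connected: "connected_graph V E"
    and weight_ratio_le: "\<And>x y. E x y \<Longrightarrow> unweighted V E x y / unweighted V E y x \<le> c"
begin

lemma edge_sym: "E x y \<Longrightarrow> E y x"
  and edge_in_V: "E x y \<Longrightarrow> x \<in> V \<and> y \<in> V"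
  using undirected unfolding undirected_graph_def by blast+

lemma has_neighbour:
  assumes "i \<in> V" obtains z where "E i z"
proof -
  have "\<not> V \<subseteq> {i}"
    using two_le_card card_mono[of "{i}" V] by auto
  then obtain y where y: "y \<in> V" "y \<noteq> i" by blast
  have "E\<^sup>*\<^sup>* i y" using connected assms y unfolding connected_graph_def by blast
  then show ?thesis using y(2) that by (cases rule: converse_rtranclpE) auto
qed

lemma deg_pos:
  assumes "i \<in> V" shows "1 \<le> deg V E i"
proof -
  obtain z where "E i z" using has_neighbour[OF assms] .
  then have "z \<in> {y \<in> V. E i y}" using edge_in_V by blast
  then show ?thesis
    unfolding deg_def using finite_V by (auto simp: Suc_le_eq card_gt_0_iff)
qed

lemma unweighted_row_sum:
  assumes "i \<in> V" shows "(\<Sum>j\<in>V. unweighted V E i j) = 1"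
proof -
  have "(\<Sum>j\<in>V. unweighted V E i j) = (\<Sum>j\<in>{y\<in>V. E i y}. 1 / real (deg V E i))"
    unfolding unweighted_def by (rule sum.inter_filter[OF finite_V, symmetric])
  also have "\<dots> = 1"
    using deg_pos[OF assms] by (simp add: deg_def[symmetric])
  finally show ?thesis .
qed

lemma deg_ratio_le:
  assumes "E x y" shows "real (deg V E y) / real (deg V E x) \<le> c"
proof -
  have "1 \<le> deg V E x" "1 \<le> deg V E y"
    using deg_pos edge_in_V[OF assms] by auto
  then have "unweighted V E x y / unweighted V E y x = real (deg V E y) / real (deg V E x)"
    unfolding unweighted_def using assms edge_sym[OF assms] by simp
  then show ?thesis using weight_ratio_le[OF assms] by simp
qed

lemma one_le_c: "1 \<le> c"
proof (rule ccontr)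
  assume "\<not> 1 \<le> c"
  obtain x where "x \<in> V" using two_le_card by fastforce
  then obtain y where xy: "E x y" by (rule has_neighbour)
  have "1 \<le> deg V E x" "1 \<le> deg V E y" using deg_pos edge_in_V[OF xy] by auto
  then have "real (deg V E y) \<le> c * real (deg V E x)" "real (deg V E x) \<le> c * real (deg V E y)"
    using deg_ratio_le[OF xy] deg_ratio_le[OF edge_sym[OF xy]] by (simp_all add: divide_le_eq)
  moreover have "c * real (deg V E x) < real (deg V E x)" "c * real (deg V E y) < real (deg V E y)"
    using \<open>\<not> 1 \<le> c\<close> \<open>1 \<le> deg V E x\<close> \<open>1 \<le> deg V E y\<close> by simp_all
  ultimately show False by linarith
qed

lemma unweighted_column_sum_le:
  assumes "j \<in> V" shows "(\<Sum>i\<in>V. unweighted V E i j) \<le> c"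
proof -
  have dj: "1 \<le> deg V E j" using deg_pos[OF assms] .
  have "unweighted V E i j \<le> (if E j i then c / real (deg V E j) else 0)" for i
  proof (cases "E i j")
    case True
    have "1 \<le> deg V E i" using deg_pos edge_in_V[OF True] by auto
    then have "1 / real (deg V E i) \<le> c / real (deg V E j)"
      using deg_ratio_le[OF True] dj by (simp add: field_simps)
    then show ?thesis using True edge_sym[OF True] unfolding unweighted_def by simp
  next
    case False
    then show ?thesis using edge_sym one_le_c dj unfolding unweighted_def by auto
  qed
  then have "(\<Sum>i\<in>V. unweighted V E i j) \<le> (\<Sum>i\<in>V. if E j i then c / real (deg V E j) else 0)"
    by (intro sum_mono)
  also have "\<dots> = (\<Sum>i\<in>{y\<in>V. E j y}. c / real (deg V E j))"
    by (rule sum.inter_filter[OF finite_V, symmetric])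
  also have "\<dots> = c" using dj by (simp add: deg_def[symmetric])
  finally show ?thesis .
qed

end

section \<open>The potential weights\<close>

definition log_cutoff :: "nat \<Rightarrow> nat" where
  "log_cutoff n = nat \<lfloor>ln (real n)\<rfloor>"

definition head_inflation :: "nat \<Rightarrow> real" where
  "head_inflation n = (real n - 1) / (real n - real (log_cutoff n) - 1)"

definition potential_weight_ratio :: "real \<Rightarrow> real \<Rightarrow> nat \<Rightarrow> nat \<Rightarrow> real" where
  "potential_weight_ratio c r n k =
     (if k \<le> log_cutoff n + 1 then c / r * head_inflation n else 2 * c / r)"

definition potential_weight :: "real \<Rightarrow> real \<Rightarrow> nat \<Rightarrow> nat \<Rightarrow> real" where
  "potential_weight c r n j = (\<Prod>k\<in>{1..j}. potential_weight_ratio c r n k)"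

definition potential_weight_sum :: "real \<Rightarrow> real \<Rightarrow> nat \<Rightarrow> real" where
  "potential_weight_sum c r n = (\<Sum>j<n. potential_weight c r n j)"

lemma ln_less_minus_one: "2 \<le> n \<Longrightarrow> ln (real n) < real n - 1"
  using ln_le_minus_one[of "real n"] ln_eq_minus_one[of "real n"] by fastforce

lemma log_cutoff_le: "real (log_cutoff n) \<le> ln (real n)"
  and ln_less_log_cutoff: "ln (real n) < real (log_cutoff n) + 1"
proof -
  have "0 \<le> ln (real n)" by (cases n) auto
  then show "real (log_cutoff n) \<le> ln (real n)" "ln (real n) < real (log_cutoff n) + 1"
    unfolding log_cutoff_def by linarith+
qed

lemma log_cutoff_add_2_le: "2 \<le> n \<Longrightarrow> log_cutoff n + 2 \<le> n"
  using log_cutoff_le[of n] ln_less_minus_one[of n] by linarith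

lemma one_le_head_inflation: "2 \<le> n \<Longrightarrow> 1 \<le> head_inflation n"
  using log_cutoff_add_2_le[of n] by (simp add: head_inflation_def field_simps)

lemma potential_weight_0 [simp]: "potential_weight c r n 0 = 1"
  by (simp add: potential_weight_def)

lemma potential_weight_Suc:
  "potential_weight c r n (Suc j) = potential_weight_ratio c r n (Suc j) * potential_weight c r n j"
  by (simp add: potential_weight_def prod.nat_ivl_Suc' mult.commute)

lemma potential_weight_pos: "0 < c \<Longrightarrow> 0 < r \<Longrightarrow> 2 \<le> n \<Longrightarrow> 0 < potential_weight c r n j"
  unfolding potential_weight_def potential_weight_ratio_def
  using one_le_head_inflation[of n] by (intro prod_pos) auto

lemma potential_weight_head:
  "j \<le> log_cutoff n + 1 \<Longrightarrow> potential_weight c r n j = (c / r * head_inflation n) ^ j"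
  unfolding potential_weight_def potential_weight_ratio_def by simp

lemma potential_weight_le_power:
  assumes "0 < c" "0 < r" "2 \<le> n" and "head_inflation n \<le> 2"
  shows "potential_weight c r n j \<le> (2 * c / r) ^ j"
proof -
  have "potential_weight c r n j \<le> (\<Prod>k\<in>{1..j}. 2 * c / r)"
    unfolding potential_weight_def potential_weight_ratio_def
    using assms one_le_head_inflation[of n] mult_left_mono[of "head_inflation n" 2 "c / r"]
    by (intro prod_mono) (auto simp: mult.commute)
  then show ?thesis by simp
qed

lemma boundary_le_gain_times_ratio:
  fixes D c r :: real
  assumes c: "1 \<le> c" and r: "0 < r" and k: "1 \<le> k" "k < n"
    and D: "D \<le> c * real k" "D \<le> real n - real k"
  shows "D \<le> clique_gain r n k * potential_weight_ratio c r n k"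
proof (cases "k \<le> log_cutoff n + 1")
  case True
  have n: "log_cutoff n + 2 \<le> n" using log_cutoff_add_2_le k by simp
  have "clique_gain r n k * potential_weight_ratio c r n k
      = c * real k * ((real n - real k) / (real n - real (log_cutoff n) - 1))"
  proof -
    define a b where "a = real n - 1" and "b = real n - real (log_cutoff n) - 1"
    have "a \<noteq> 0" "b \<noteq> 0" using n by (auto simp: a_def b_def)
    then have "r * real k * (real n - real k) / a * (c / r * (a / b))
        = c * real k * ((real n - real k) / b)"
      using r by (simp add: field_simps)
    then show ?thesis
      using True unfolding clique_gain_def potential_weight_ratio_def head_inflation_def a_def b_def
      by simp
  qed
  moreover have "1 \<le> (real n - real k) / (real n - real (log_cutoff n) - 1)"
    using True n by (simp add: field_simps)
  ultimately show ?thesis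
    using D(1) c k mult_left_mono[of 1 _ "c * real k"] by fastforce
next
  case False
  have gain: "clique_gain r n k * potential_weight_ratio c r n k
      = c * real k * (2 * (real n - real k) / (real n - 1))"
    using False r k unfolding clique_gain_def potential_weight_ratio_def by (simp add: field_simps)
  show ?thesis
  proof (cases "real n - 1 \<le> 2 * (real n - real k)")
    case True
    then have "1 \<le> 2 * (real n - real k) / (real n - 1)"
      using k by simp
    then have "c * real k * 1 \<le> c * real k * (2 * (real n - real k) / (real n - 1))"
      using c k by (intro mult_left_mono) auto
    then show ?thesis using D(1) gain by simp
  next
    case False
    then have "real n - 1 < 1 * (2 * real k)"
      unfolding right_diff_distrib by linarith
    also have "\<dots> \<le> c * (2 * real k)"
      using c by (intro mult_right_mono) auto
    finally have "real n - 1 \<le> 2 * c * real k"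
      by simp
    then have "1 \<le> 2 * c * real k / (real n - 1)"
      using k by simp
    then have "(real n - real k) * 1 \<le> (real n - real k) * (2 * c * real k / (real n - 1))"
      using k by (intro mult_left_mono) auto
    also have "\<dots> = c * real k * (2 * (real n - real k) / (real n - 1))"
      by simp
    finally show ?thesis using D(2) gain by simp
  qed
qed

context degree_ratio_graph
begin

lemma potential_weight_drift:
  assumes r: "0 < r" and S: "S \<subseteq> V" "S \<noteq> {}" "S \<noteq> V"
  shows "boundary_weight V (unweighted V E) S * potential_weight c r (card V) (card S - 1)
    \<le> clique_gain r (card V) (card S) * potential_weight c r (card V) (card S)"
proof -
  have k: "1 \<le> card S" "card S < card V" using card_transient[OF finite_V S] by auto
  have "boundary_weight V (unweighted V E) S
      \<le> clique_gain r (card V) (card S) * potential_weight_ratio c r (card V) (card S)"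
  proof (rule boundary_le_gain_times_ratio[OF one_le_c r k])
    show "boundary_weight V (unweighted V E) S \<le> c * real (card S)"
      using S finite_V unweighted_column_sum_le
      by (intro boundary_weight_le_column_sum) (auto simp: unweighted_def)
    show "boundary_weight V (unweighted V E) S \<le> real (card V) - real (card S)"
      using S finite_V unweighted_row_sum
      by (intro boundary_weight_le_card_Diff) (auto simp: unweighted_def)
  qed
  moreover have "0 < potential_weight c r (card V) (card S - 1)"
    using one_le_c r two_le_card by (intro potential_weight_pos) auto
  ultimately show ?thesis
    using potential_weight_Suc[of c r "card V" "card S - 1"] k
    by (simp add: mult_right_mono mult.assoc)
qed

theorem fixation_probability_ge_inverse_weight_sum:
  assumes r: "0 < r"
  shows "1 / potential_weight_sum c r (card V)
    \<le> fixation_probability V (unweighted V E) (clique_weights V) r"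
proof -
  interpret clique_mutant_process V "unweighted V E" r
    using finite_V two_le_card r unweighted_row_sum clique_weights_row_sum
    by unfold_locales (auto simp: unweighted_def clique_weights_nonneg)
  have "1 / potential_weight_sum c r (card V) \<le> fixation_prob V (unweighted V E) (clique_weights V) r {v}"
    if "v \<in> V" for v
    using fixation_prob_ge_potential[OF _ potential_weight_drift[OF r] that] one_le_c r two_le_card
    by (simp add: potential_weight_pos potential_weight_sum_def)
  then have "real (card V) * (1 / potential_weight_sum c r (card V))
      \<le> (\<Sum>v\<in>V. fixation_prob V (unweighted V E) (clique_weights V) r {v})"
    using sum_mono[of V "\<lambda>_. 1 / potential_weight_sum c r (card V)"] by simp
  then show ?thesis
    using two_le_card unfolding fixation_probability_def by (simp add: field_simps)
qed

end

section \<open>Geometric sums and asymptotics\<close>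

lemma tail_quot_add: "tail_quot Q a b + tail_quot Q b N = tail_quot Q a N"
  unfolding tail_quot_def by (simp add: add_divide_distrib[symmetric])

lemma tail_quot_Suc: "0 < Q \<Longrightarrow> tail_quot Q a (a + 1) = Q powr a"
  by (simp add: tail_quot_def powr_add field_simps)

lemma tail_quot_pos:
  assumes Q: "0 < Q" and "a < b" shows "0 < tail_quot Q a b"
proof -
  consider "Q < 1" | "Q = 1" | "1 < Q" by linarith
  then show ?thesis
  proof cases
    case 1
    then have "Q powr b < Q powr a"
      using Q \<open>a < b\<close> by (simp add: powr_def)
    then show ?thesis using 1 by (simp add: tail_quot_def)
  next
    case 3
    then have "Q powr a < Q powr b"
      using \<open>a < b\<close> by (rule powr_less_mono[rotated])
    then show ?thesis using 3 by (simp add: tail_quot_def divide_neg_neg)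
  qed (use \<open>a < b\<close> in \<open>simp add: tail_quot_def\<close>)
qed

lemma tail_quot_nonneg: "0 < Q \<Longrightarrow> a \<le> b \<Longrightarrow> 0 \<le> tail_quot Q a b"
  using tail_quot_pos[of Q a b] by (cases "a = b") (auto simp: tail_quot_def)

lemma tail_quot_mono: "0 < Q \<Longrightarrow> M \<le> N \<Longrightarrow> tail_quot Q a M \<le> tail_quot Q a N"
  using tail_quot_add[of Q a M N] tail_quot_nonneg[of Q M N] by linarith

lemma tail_quot_antimono: "0 < Q \<Longrightarrow> a \<le> b \<Longrightarrow> tail_quot Q b N \<le> tail_quot Q a N"
  using tail_quot_add[of Q a b N] tail_quot_nonneg[of Q a b] by linarith

lemma tail_quot_of_nat:
  assumes "0 < Q" and "m \<le> n"
  shows "tail_quot Q (real m) (real n) = (\<Sum>j\<in>{m..<n}. Q ^ j)"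
proof -
  have "(\<Sum>j\<in>{m..<n}. Q ^ j) = (\<Sum>j<n. Q ^ j) - (\<Sum>j<m. Q ^ j)"
    using sum_diff_nat_ivl[of 0 m n "\<lambda>j. Q ^ j"] assms by (simp add: atLeast0LessThan)
  then show ?thesis
    using assms by (simp add: tail_quot_def sum_gp_strict powr_realpow diff_divide_distrib)
qed

lemma geo_quot_eq_tail_quot: "0 < q \<Longrightarrow> geo_quot q L = tail_quot q 0 L"
  by (simp add: geo_quot_def tail_quot_def)

lemma powr_le_of_dist_le_1:
  fixes q :: real
  assumes q: "0 < q" and "\<bar>x - L\<bar> \<le> 1"
  shows "q powr x \<le> (q + 1 / q) * q powr L"
proof -
  have "0 < 1 / q" using q by simp
  have "q powr (x - L) \<le> q + 1 / q"
  proof (cases "1 \<le> q")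
    case True
    then have "q powr (x - L) \<le> q powr 1" using assms by (intro powr_mono) auto
    then have "q powr (x - L) \<le> q" using q by simp
    with \<open>0 < 1 / q\<close> show ?thesis by linarith
  next
    case False
    then have "q powr (x - L) \<le> q powr (- 1)" using assms by (intro powr_mono') auto
    then show ?thesis using q by (simp add: powr_minus divide_inverse)
  qed
  then have "q powr (x - L) * q powr L \<le> (q + 1 / q) * q powr L"
    by (intro mult_right_mono) auto
  then show ?thesis by (simp add: powr_add[symmetric])
qed

lemma head_power_sum_le:
  fixes q L :: real
  assumes q: "0 < q" and p: "real p \<le> L" "L < real p + 1"
  shows "(\<Sum>j<p + 2. q ^ j) \<le> geo_quot q L + 2 * ((q + 1 / q) * q powr L)"
proof -
  have "(\<Sum>j<p. q ^ j) = tail_quot q (real 0) (real p)"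
    using tail_quot_of_nat[OF q, of 0 p] by (simp add: atLeast0LessThan)
  also have "\<dots> \<le> geo_quot q L"
    using tail_quot_mono[OF q p(1)] q by (simp add: geo_quot_eq_tail_quot)
  finally have "(\<Sum>j<p. q ^ j) \<le> geo_quot q L" .
  moreover have "q ^ p \<le> (q + 1 / q) * q powr L" "q ^ (p + 1) \<le> (q + 1 / q) * q powr L"
    using p powr_le_of_dist_le_1[OF q, of "real p" L] powr_le_of_dist_le_1[OF q, of "real (p + 1)" L]
      powr_realpow[OF q, of p] powr_realpow[OF q, of "p + 1"]
    by (simp_all only:)
  moreover have "(\<Sum>j<p + 2. q ^ j) = (\<Sum>j<p. q ^ j) + q ^ p + q ^ (p + 1)"
    by (simp add: numeral_2_eq_2)
  ultimately show ?thesis by linarith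
qed

lemma tail_power_sum_le:
  fixes Q L :: real
  assumes Q: "0 < Q" and p: "real p \<le> L" "L < real p + 1" and n: "p + 2 \<le> n"
  shows "(\<Sum>j\<in>{p + 2..<n}. Q ^ j) \<le> tail_quot Q L (real n) - Q powr L"
proof -
  have "(\<Sum>j\<in>{p + 2..<n}. Q ^ j) = tail_quot Q (real (p + 2)) (real n)"
    using tail_quot_of_nat[OF Q n] by simp
  also have "\<dots> \<le> tail_quot Q (L + 1) (real n)"
    using p by (intro tail_quot_antimono[OF Q]) auto
  also have "\<dots> = tail_quot Q L (real n) - Q powr L"
    using tail_quot_add[of Q L "L + 1" "real n"] tail_quot_Suc[OF Q, of L] by simp
  finally show ?thesis .
qed

lemma potential_weight_sum_le:
  fixes c r :: real and n :: nat
  defines "q \<equiv> c / r" and "L \<equiv> ln (real n)" and "\<theta> \<equiv> head_inflation n"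
  assumes c: "0 < c" and r: "0 < r" and n: "2 \<le> n" and \<theta>: "\<theta> \<le> 2"
  shows "potential_weight_sum c r n
    \<le> \<theta> ^ (log_cutoff n + 1) * (geo_quot q L + 2 * ((q + 1 / q) * q powr L))
      + tail_quot (2 * q) L (real n) - (2 * q) powr L"
proof -
  define p where "p = log_cutoff n"
  have q: "0 < q" using c r by (simp add: q_def)
  have p: "real p \<le> L" "L < real p + 1" "p + 2 \<le> n"
    using log_cutoff_le ln_less_log_cutoff log_cutoff_add_2_le[OF n] by (auto simp: p_def L_def)
  have \<theta>_ge_1: "1 \<le> \<theta>" using one_le_head_inflation[OF n] by (simp add: \<theta>_def)
  have "potential_weight_sum c r n
      = (\<Sum>j<p + 2. potential_weight c r n j) + (\<Sum>j\<in>{p + 2..<n}. potential_weight c r n j)"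
    unfolding potential_weight_sum_def
    using sum_diff_nat_ivl[of 0 "p + 2" n "potential_weight c r n"] p(3)
    by (simp add: atLeast0LessThan)
  also have "(\<Sum>j<p + 2. potential_weight c r n j) \<le> (\<Sum>j<p + 2. \<theta> ^ (p + 1) * q ^ j)"
  proof (rule sum_mono)
    fix j assume "j \<in> {..<p + 2}"
    then have j: "j \<le> p + 1" by simp
    have "potential_weight c r n j = q ^ j * \<theta> ^ j"
      unfolding potential_weight_head[OF j[unfolded p_def]] q_def \<theta>_def by (rule power_mult_distrib)
    also have "\<dots> \<le> q ^ j * \<theta> ^ (p + 1)"
      using q \<theta>_ge_1 j by (intro mult_left_mono power_increasing) auto
    finally show "potential_weight c r n j \<le> \<theta> ^ (p + 1) * q ^ j" by (simp add: mult.commute)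
  qed
  also have "\<dots> = \<theta> ^ (p + 1) * (\<Sum>j<p + 2. q ^ j)"
    by (rule sum_distrib_left[symmetric])
  also have "\<dots> \<le> \<theta> ^ (p + 1) * (geo_quot q L + 2 * ((q + 1 / q) * q powr L))"
    using head_power_sum_le[OF q p(1,2)] \<theta>_ge_1 by (intro mult_left_mono) auto
  also have "(\<Sum>j\<in>{p + 2..<n}. potential_weight c r n j) \<le> (\<Sum>j\<in>{p + 2..<n}. (2 * q) ^ j)"
    using potential_weight_le_power[OF c r n] \<theta> by (intro sum_mono) (auto simp: q_def \<theta>_def)
  also have "\<dots> \<le> tail_quot (2 * q) L (real n) - (2 * q) powr L"
    using q by (intro tail_power_sum_le p) auto
  finally show ?thesis by (simp add: p_def add_diff_eq)
qed

lemma head_inflation_power_tendsto_1: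
  "(\<lambda>n. head_inflation n ^ (log_cutoff n + 1)) \<longlonglongrightarrow> 1"
proof (rule tendsto_sandwich)
  define B where "B n = ((real n - 1) / (real n - 1 - ln (real n))) powr (ln (real n) + 1)" for n
  have "head_inflation n ^ (log_cutoff n + 1) \<le> B n" if n: "2 \<le> n" for n
  proof -
    have \<theta>: "1 \<le> head_inflation n" by (rule one_le_head_inflation[OF n])
    have "head_inflation n \<le> (real n - 1) / (real n - 1 - ln (real n))"
      unfolding head_inflation_def using log_cutoff_le[of n] ln_less_minus_one[OF n] n
      by (intro divide_left_mono) auto
    then have "head_inflation n powr (ln (real n) + 1) \<le> B n"
      unfolding B_def using \<theta> n by (intro powr_mono2) auto
    moreover have "head_inflation n ^ (log_cutoff n + 1) = head_inflation n powr real (log_cutoff n + 1)"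
      using \<theta> by (intro powr_realpow[symmetric]) simp
    moreover have "\<dots> \<le> head_inflation n powr (ln (real n) + 1)"
      using \<theta> log_cutoff_le[of n] by (intro powr_mono) auto
    ultimately show ?thesis by linarith
  qed
  then show "\<forall>\<^sub>F n in sequentially. head_inflation n ^ (log_cutoff n + 1) \<le> B n"
    using eventually_ge_at_top by (rule eventually_mono[rotated]) blast
  show "\<forall>\<^sub>F n in sequentially. 1 \<le> head_inflation n ^ (log_cutoff n + 1)"
    using eventually_ge_at_top[of 2] by eventually_elim (rule one_le_power[OF one_le_head_inflation])
  show "B \<longlonglongrightarrow> 1"
    unfolding B_def by real_asymp
qed simp

lemma geo_quot_pos: "0 < q \<Longrightarrow> 0 < L \<Longrightarrow> 0 < geo_quot q L"
  by (simp add: geo_quot_eq_tail_quot tail_quot_pos)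

text \<open>The error term is chosen as the least one that makes the bound hold; what needs proof
  is that it vanishes.\<close>

definition relative_error :: "real \<Rightarrow> real \<Rightarrow> nat \<Rightarrow> real" where
  "relative_error c r n =
     (if 2 \<le> n then
        max 0 ((potential_weight_sum c r n - tail_quot (2 * c / r) (ln (real n)) (real n))
               / geo_quot (c / r) (ln (real n)) - 1)
      else 0)"

lemma potential_weight_sum_le_relative_error:
  assumes "0 < c" "0 < r" "2 \<le> n"
  shows "potential_weight_sum c r n \<le>
    geo_quot (c / r) (ln (real n)) * (1 + relative_error c r n)
    + tail_quot (2 * c / r) (ln (real n)) (real n)"
proof -
  have "0 < geo_quot (c / r) (ln (real n))"
    using assms by (intro geo_quot_pos) auto
  moreover have "(potential_weight_sum c r n - tail_quot (2 * c / r) (ln (real n)) (real n))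
      / geo_quot (c / r) (ln (real n)) \<le> 1 + relative_error c r n"
    using assms unfolding relative_error_def by auto
  ultimately show ?thesis
    by (simp add: divide_le_eq mult.commute)
qed

lemma relative_error_le:
  fixes c r :: real and n :: nat
  defines "q \<equiv> c / r" and "T \<equiv> head_inflation n ^ (log_cutoff n + 1)"
  assumes c: "0 < c" and r: "0 < r" and n: "2 \<le> n" and T: "T \<le> 2"
    and large: "4 * (q + 1 / q) \<le> 2 powr ln (real n)"
  shows "relative_error c r n \<le> T - 1"
proof -
  define L where "L = ln (real n)"
  define A where "A = (q + 1 / q) * q powr L"
  have q: "0 < q" using c r by (simp add: q_def)
  have \<theta>: "1 \<le> head_inflation n" using one_le_head_inflation[OF n] .
  have T_ge: "1 \<le> T" "head_inflation n \<le> T"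
    unfolding T_def using power_increasing[of 1 "log_cutoff n + 1" "head_inflation n"] \<theta>
    by (simp_all only: one_le_power) simp
  have geo: "0 < geo_quot q L"
    using q n by (intro geo_quot_pos) (auto simp: L_def)
  have "0 \<le> A" using q by (simp add: A_def)
  then have "T * (2 * A) \<le> 2 * (2 * A)"
    using T by (intro mult_right_mono) auto
  also have "\<dots> = 4 * (q + 1 / q) * q powr L"
    by (simp add: A_def)
  also have "\<dots> \<le> (2 * q) powr L"
    using large q by (simp add: L_def powr_mult mult_right_mono)
  finally have "potential_weight_sum c r n - tail_quot (2 * q) L (real n) \<le> T * geo_quot q L"
    using potential_weight_sum_le[OF c r n] T_ge T
    by (simp add: q_def L_def A_def T_def algebra_simps)
  then have "(potential_weight_sum c r n - tail_quot (2 * q) L (real n)) / geo_quot q L - 1 \<le> T - 1"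
    using geo by (simp add: divide_le_eq)
  then show ?thesis
    using n T_ge by (simp add: relative_error_def q_def L_def)
qed

lemma relative_error_tendsto_0:
  assumes c: "0 < c" and r: "0 < r"
  shows "relative_error c r \<longlonglongrightarrow> 0"
proof (rule tendsto_sandwich)
  define T where "T n = head_inflation n ^ (log_cutoff n + 1)" for n
  have "\<forall>\<^sub>F n in sequentially. T n < 2"
    unfolding T_def using head_inflation_power_tendsto_1 by (rule order_tendstoD) simp
  moreover have "\<forall>\<^sub>F n in sequentially. 4 * (c / r + 1 / (c / r)) \<le> 2 powr ln (real n)"
  proof -
    have "filterlim (\<lambda>n::nat. (2::real) powr ln (real n)) at_top sequentially"
      by real_asymp
    then show ?thesis by (simp add: filterlim_at_top)
  qed
  ultimately show "\<forall>\<^sub>F n in sequentially. relative_error c r n \<le> T n - 1"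
    using eventually_ge_at_top[of 2]
    by eventually_elim (unfold T_def, rule relative_error_le[OF c r], auto)
  show "\<forall>\<^sub>F n in sequentially. 0 \<le> relative_error c r n"
    by (simp add: relative_error_def)
  show "(\<lambda>n. T n - 1) \<longlonglongrightarrow> 0"
    using tendsto_diff[OF head_inflation_power_tendsto_1 tendsto_const[of 1]] by (simp add: T_def)
qed simp

lemma powr_ln_tendsto_0:
  fixes q :: real
  assumes "0 < q" and "q < 1"
  shows "(\<lambda>n. q powr ln (real n)) \<longlonglongrightarrow> 0"
proof -
  have "(\<lambda>n. real n powr ln q) \<longlonglongrightarrow> 0"
    using assms by (intro tendsto_neg_powr filterlim_real_sequentially) simp
  moreover have "\<forall>\<^sub>F n in sequentially. real n powr ln q = q powr ln (real n)"
    using eventually_ge_at_top[of 1]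
    by eventually_elim (use assms in \<open>auto simp: powr_def mult.commute\<close>)
  ultimately show ?thesis by (rule Lim_transform_eventually)
qed

lemma lower_bound_tendsto:
  assumes c: "0 < c" and r: "2 * c < r" and \<epsilon>: "\<epsilon> \<longlonglongrightarrow> 0"
  shows "(\<lambda>n. lower_bound c r \<epsilon> n) \<longlonglongrightarrow> 1 - c / r"
proof -
  define q where "q = c / r"
  have q: "0 < q" "2 * q < 1" using c r by (auto simp: q_def field_simps)
  have "(\<lambda>n. geo_quot q (ln (real n))) \<longlonglongrightarrow> (1 - 0) / (1 - q)"
  proof (rule Lim_transform_eventually)
    show "(\<lambda>n. (1 - q powr ln (real n)) / (1 - q)) \<longlonglongrightarrow> (1 - 0) / (1 - q)"
      using q by (intro tendsto_intros powr_ln_tendsto_0) auto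
    show "\<forall>\<^sub>F n in sequentially. (1 - q powr ln (real n)) / (1 - q) = geo_quot q (ln (real n))"
      using q by (simp add: geo_quot_def)
  qed
  moreover have "(\<lambda>n. tail_quot (2 * q) (ln (real n)) (real n)) \<longlonglongrightarrow> (0 - 0) / (1 - 2 * q)"
  proof (rule Lim_transform_eventually)
    show "(\<lambda>n. ((2 * q) powr ln (real n) - (2 * q) ^ n) / (1 - 2 * q)) \<longlonglongrightarrow> (0 - 0) / (1 - 2 * q)"
      using q by (intro tendsto_intros powr_ln_tendsto_0 LIMSEQ_power_zero) auto
    show "\<forall>\<^sub>F n in sequentially.
        ((2 * q) powr ln (real n) - (2 * q) ^ n) / (1 - 2 * q)
        = tail_quot (2 * q) (ln (real n)) (real n)"
      using q by (simp add: tail_quot_def powr_realpow)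
  qed
  ultimately have "(\<lambda>n. lower_bound c r \<epsilon> n)
      \<longlonglongrightarrow> 1 / ((1 - 0) / (1 - q) * (1 + 0) + (0 - 0) / (1 - 2 * q))"
    unfolding lower_bound_def q_def using q \<epsilon>
    by (intro tendsto_intros) (auto simp: q_def)
  then show ?thesis using q by (simp add: q_def)
qed

lemma lower_bound_at_1: "0 < c \<Longrightarrow> 0 < r \<Longrightarrow> lower_bound c r \<epsilon> 1 = 1"
  by (simp add: lower_bound_def geo_quot_def tail_quot_def)

lemma fixation_probability_singleton: "fixation_probability {v} WR WM r = 1"
proof -
  have "fix_within {v} WR WM r k {v} = 1" for k by (cases k) simp_all
  then show ?thesis by (simp add: fixation_probability_def fixation_prob_def)
qed

theorem theorem6:
  fixes c r :: real
  assumes "c > 0" and "r > 0"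
  shows "\<exists>\<epsilon> :: nat \<Rightarrow> real. \<epsilon> \<longlonglongrightarrow> 0 \<and>
    (\<forall>n E. n \<ge> 1 \<and> undirected_graph {1..n} E \<and> connected_graph {1..n} E \<and>
        (\<forall>x y. E x y \<longrightarrow> unweighted {1..n} E x y / unweighted {1..n} E y x \<le> c) \<longrightarrow>
        fixation_probability {1..n} (unweighted {1..n} E) (clique_weights {1..n}) r
          \<ge> lower_bound c r \<epsilon> n) \<and>
    (r > 2 * c \<longrightarrow> (\<lambda>n. lower_bound c r \<epsilon> n) \<longlonglongrightarrow> 1 - c / r)"
proof (intro exI[of _ "relative_error c r"] conjI allI impI)
  show "relative_error c r \<longlonglongrightarrow> 0"
    using assms by (rule relative_error_tendsto_0)
  show "(\<lambda>n. lower_bound c r (relative_error c r) n) \<longlonglongrightarrow> 1 - c / r" if "r > 2 * c"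
    using assms(1) that \<open>relative_error c r \<longlonglongrightarrow> 0\<close> by (rule lower_bound_tendsto)
  fix n E
  assume H: "n \<ge> 1 \<and> undirected_graph {1..n} E \<and> connected_graph {1..n} E \<and>
      (\<forall>x y. E x y \<longrightarrow> unweighted {1..n} E x y / unweighted {1..n} E y x \<le> c)"
  show "fixation_probability {1..n} (unweighted {1..n} E) (clique_weights {1..n}) r
      \<ge> lower_bound c r (relative_error c r) n"
  proof (cases "n = 1")
    case True
    then show ?thesis
      using lower_bound_at_1[OF assms] fixation_probability_singleton[of 1] by simp
  next
    case False
    then have n: "2 \<le> n" using H by simp
    interpret degree_ratio_graph "{1..n}" E c
      using n H by unfold_locales auto
    have "0 < potential_weight_sum c r n"
      unfolding potential_weight_sum_def using assms n
      by (intro sum_pos potential_weight_pos) (auto simp: lessThan_empty_iff)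
    then have "lower_bound c r (relative_error c r) n \<le> 1 / potential_weight_sum c r n"
      unfolding lower_bound_def
      using potential_weight_sum_le_relative_error[OF assms n] by (intro divide_left_mono) auto
    also have "\<dots> \<le> fixation_probability {1..n} (unweighted {1..n} E) (clique_weights {1..n}) r"
      using fixation_probability_ge_inverse_weight_sum[OF assms(2)] by simp
    finally show ?thesis .
  qed
qed

end
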